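(* Let $A$ be a commutative ring. Then $A$ is a $\mathrm{GE}_2$-ring if and only if the graph $\Gamma(A)$ is path-connected.
   Context: $\Gamma(A)$ is the graph whose vertices are classes of unimodular rows $(a,b)\in A^2$ modulo multiplication by units, with $\{[u],[v]\}$ an edge when the matrix with rows $u,v$ lies in $\mathrm{GL}_2(A)$. $\mathrm{GE}_2(A)$ is the subgroup of $\mathrm{GL}_2(A)$ generated by elementary matrices and invertible diagonal matrices; $A$ is a $\mathrm{GE}_2$-ring if $\mathrm{GE}_2(A)=\mathrm{GL}_2(A)$ (equivalently, $\mathrm{SL}_2(A)$ is generated by elementary matrices). *)

theory Defs
  imports Main
begin

datatype 'a mat2 = M2 'a 'a 'a 'a  (* M2 a b c d = [[a,b],[c,d]] *)

fun mat2_mult :: "'a::comm_ring_1 mat2 \<Rightarrow> 'a mat2 \<Rightarrow> 'a mat2" where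
  "mat2_mult (M2 a b c d) (M2 e f g h) =
     M2 (a*e + b*g) (a*f + b*h) (c*e + d*g) (c*f + d*h)"

definition mat2_one :: "'a::comm_ring_1 mat2" where
  "mat2_one = M2 1 0 0 1"

fun det2 :: "'a::comm_ring_1 mat2 \<Rightarrow> 'a" where
  "det2 (M2 a b c d) = a*d - b*c"

definition GL2 :: "'a::comm_ring_1 mat2 set" where
  "GL2 = {m. \<exists>m'. mat2_mult m m' = mat2_one \<and> mat2_mult m' m = mat2_one}"

definition GE2_gens :: "'a::comm_ring_1 mat2 set" where
  "GE2_gens = {M2 1 x 0 1 | x. True} \<union> {M2 1 0 x 1 | x. True}
             \<union> {M2 u 0 0 v | u v. u dvd 1 \<and> v dvd 1}"

definition GE2 :: "'a::comm_ring_1 mat2 set" where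
  "GE2 = \<Inter> {H. H \<subseteq> GL2 \<and> mat2_one \<in> H \<and> GE2_gens \<subseteq> H
              \<and> (\<forall>x\<in>H. \<forall>y\<in>H. mat2_mult x y \<in> H)
              \<and> (\<forall>x\<in>H. \<exists>y\<in>H. mat2_mult x y = mat2_one \<and> mat2_mult y x = mat2_one)}"

definition GE2_ring :: "'a::comm_ring_1 itself \<Rightarrow> bool" where
  "GE2_ring _ \<longleftrightarrow> (GE2 :: 'a mat2 set) = GL2"

definition unimod_rows :: "('a::comm_ring_1 \<times> 'a) set" where
  "unimod_rows = {(a, b). \<exists>x y. a*x + b*y = 1}"

definition unit_equiv :: "(('a::comm_ring_1 \<times> 'a) \<times> ('a \<times> 'a)) set" where
  "unit_equiv = {(u, v). u \<in> unimod_rows \<and> v \<in> unimod_rows \<and>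
                  (\<exists>c. c dvd 1 \<and> v = (c * fst u, c * snd u))}"

definition Gamma_V :: "('a::comm_ring_1 \<times> 'a) set set" where
  "Gamma_V = unimod_rows // unit_equiv"

definition Gamma_E :: "(('a::comm_ring_1 \<times> 'a) set \<times> ('a \<times> 'a) set) set" where
  "Gamma_E = {(X, Y). X \<in> Gamma_V \<and> Y \<in> Gamma_V \<and>
      (\<exists>u\<in>X. \<exists>v\<in>Y. M2 (fst u) (snd u) (fst v) (snd v) \<in> GL2)}"

definition Gamma_path_connected :: "'a::comm_ring_1 itself \<Rightarrow> bool" where
  "Gamma_path_connected _ \<longleftrightarrow>
     (\<forall>X \<in> (Gamma_V :: ('a \<times> 'a) set set). \<forall>Y \<in> Gamma_V. (X, Y) \<in> Gamma_E\<^sup>*)"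

end

theory Submission
  imports Defs
begin

text \<open>
  Left multiplication by an elementary or diagonal matrix moves the first row of a matrix
  \<open>m \<in> GL\<^sub>2(A)\<close> at most two edges in \<open>\<Gamma>(A)\<close>: \<open>E\<^sub>1\<^sub>2(x)\<close> replaces the row \<open>r\<^sub>1\<close> by
  \<open>r\<^sub>1 + x r\<^sub>2\<close>, and both are adjacent to \<open>r\<^sub>2\<close>. Hence for \<open>g \<in> GE\<^sub>2(A)\<close> the first row of \<open>g\<close>
  is joined to \<open>(1, 0)\<close>; if \<open>GE\<^sub>2(A) = GL\<^sub>2(A)\<close>, every unimodular row is such a first row.
  Conversely, whether \<open>g \<in> GL\<^sub>2(A)\<close> lies in \<open>GE\<^sub>2(A)\<close> depends only on the class of its first
  row, because two matrices with proportional first rows differ by a lower triangular factor.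
  Along a path from \<open>[(1, 0)]\<close> every edge \<open>{[u], [v]}\<close> then yields a matrix of \<open>GE\<^sub>2(A)\<close>
  with rows \<open>u, v\<close>, and swapping its rows brings \<open>v\<close> to the top.
\<close>

fun row1 :: "'a mat2 \<Rightarrow> 'a \<times> 'a" where
  "row1 (M2 a b c d) = (a, b)"

lemma mult_dvd_one: "u dvd 1 \<Longrightarrow> v dvd 1 \<Longrightarrow> u * v dvd (1::'a::comm_semiring_1)"
  using mult_dvd_mono[of u 1 v 1] by simp

lemma mat2_mult_assoc:
  fixes x y z :: "'a::comm_ring_1 mat2"
  shows "mat2_mult (mat2_mult x y) z = mat2_mult x (mat2_mult y z)"
  by (cases x; cases y; cases z) (simp add: algebra_simps)

lemma mat2_mult_one_left [simp]: "mat2_mult mat2_one m = (m::'a::comm_ring_1 mat2)"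
  by (cases m) (simp add: mat2_one_def)

lemma mat2_mult_one_right [simp]: "mat2_mult m mat2_one = (m::'a::comm_ring_1 mat2)"
  by (cases m) (simp add: mat2_one_def)

lemma det2_mult: "det2 (mat2_mult m n) = det2 m * det2 (n::'a::comm_ring_1 mat2)"
  by (cases m; cases n) (simp add: algebra_simps)

lemma GL2_iff_det2_dvd_one: "(m::'a::comm_ring_1 mat2) \<in> GL2 \<longleftrightarrow> det2 m dvd 1"
proof
  assume "m \<in> GL2"
  then obtain m' where "mat2_mult m m' = mat2_one"
    unfolding GL2_def by blast
  then have "det2 m * det2 m' = 1"
    using det2_mult[of m m'] by (simp add: mat2_one_def)
  then show "det2 m dvd 1"
    by (metis dvdI)
next
  assume "det2 m dvd 1"
  obtain a b c d where m: "m = M2 a b c d"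
    by (cases m)
  obtain e where e: "1 = (a*d - b*c) * e"
    using \<open>det2 m dvd 1\<close> m by (auto elim: dvdE)
  let ?adj = "M2 (e*d) (-(e*b)) (-(e*c)) (e*a)"
  have "mat2_mult m ?adj = mat2_one" and "mat2_mult ?adj m = mat2_one"
    using e unfolding m mat2_one_def by (simp_all add: algebra_simps)
  then show "m \<in> GL2"
    unfolding GL2_def by blast
qed

lemma M2_swap_rows_in_GL2:
  assumes "M2 a b c d \<in> GL2"
  shows "M2 c d a (b::'a::comm_ring_1) \<in> GL2"
proof -
  have "det2 (M2 c d a b) = - det2 (M2 a b c d)"
    by (simp add: algebra_simps)
  then show ?thesis
    using assms by (simp only: GL2_iff_det2_dvd_one minus_dvd_iff)
qed

lemma rows_unimodular_if_GL2:
  assumes "M2 a b c d \<in> GL2"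
  shows "(a, b) \<in> unimod_rows" and "(c, (d::'a::comm_ring_1)) \<in> unimod_rows"
proof -
  have first_row: "(p, q) \<in> unimod_rows" if "M2 p q r s \<in> GL2" for p q r s :: 'a
  proof -
    have "p*s - q*r dvd 1"
      using that by (simp add: GL2_iff_det2_dvd_one)
    then obtain e where "1 = (p*s - q*r) * e"
      by (rule dvdE)
    then have "p*(s*e) + q*(-(r*e)) = 1"
      by (simp add: algebra_simps)
    then show ?thesis
      unfolding unimod_rows_def by blast
  qed
  show "(a, b) \<in> unimod_rows" "(c, d) \<in> unimod_rows"
    using first_row assms M2_swap_rows_in_GL2 by blast+
qed

lemma unimodular_row_completion:
  assumes "(a, b) \<in> unimod_rows"
  obtains c d :: "'a::comm_ring_1" where "M2 a b c d \<in> GL2"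
proof -
  obtain x y where "a*x + b*y = 1"
    using assms unfolding unimod_rows_def by blast
  then have "M2 a b (-y) x \<in> GL2"
    by (simp add: GL2_iff_det2_dvd_one)
  then show thesis
    by (rule that)
qed

definition mat2_subgroup :: "'a::comm_ring_1 mat2 set \<Rightarrow> bool" where
  "mat2_subgroup H \<longleftrightarrow> H \<subseteq> GL2 \<and> mat2_one \<in> H \<and> (\<forall>x\<in>H. \<forall>y\<in>H. mat2_mult x y \<in> H)
     \<and> (\<forall>x\<in>H. \<exists>y\<in>H. mat2_mult x y = mat2_one \<and> mat2_mult y x = mat2_one)"

lemma GE2_eq_Inter_subgroups: "GE2 = \<Inter>{H. mat2_subgroup H \<and> GE2_gens \<subseteq> H}"
  unfolding GE2_def mat2_subgroup_def by (intro arg_cong[where f=Inter] Collect_cong) blast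

lemma GE2_subset_subgroup: "mat2_subgroup H \<Longrightarrow> GE2_gens \<subseteq> H \<Longrightarrow> GE2 \<subseteq> H"
  unfolding GE2_eq_Inter_subgroups by blast

lemma mat2_mult_in_GL2: "x \<in> GL2 \<Longrightarrow> y \<in> GL2 \<Longrightarrow> mat2_mult x y \<in> GL2"
  by (simp add: GL2_iff_det2_dvd_one det2_mult mult_dvd_one)

lemma mat2_one_in_GL2: "mat2_one \<in> GL2"
  by (simp add: GL2_iff_det2_dvd_one mat2_one_def)

lemma one_zero_in_unimod_rows: "(1, 0) \<in> unimod_rows"
  unfolding unimod_rows_def by (auto intro!: exI[of _ 1])

lemma mat2_subgroup_GL2: "mat2_subgroup GL2"
proof -
  have "\<exists>y\<in>GL2. mat2_mult x y = mat2_one \<and> mat2_mult y x = mat2_one" if "x \<in> GL2" for x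
    using that unfolding GL2_def by blast
  then show ?thesis
    unfolding mat2_subgroup_def using mat2_one_in_GL2 mat2_mult_in_GL2 by blast
qed

lemma GE2_gens_subset_GL2: "GE2_gens \<subseteq> GL2"
  by (auto simp: GE2_gens_def GL2_iff_det2_dvd_one mult_dvd_one)

lemma GE2_subset_GL2: "GE2 \<subseteq> GL2"
  using GE2_subset_subgroup[OF mat2_subgroup_GL2 GE2_gens_subset_GL2] .

lemma GE2_gens_subset_GE2: "GE2_gens \<subseteq> GE2"
  unfolding GE2_eq_Inter_subgroups by blast

lemma mat2_one_in_GE2: "mat2_one \<in> GE2"
  unfolding GE2_eq_Inter_subgroups mat2_subgroup_def by blast

lemma mat2_mult_in_GE2: "x \<in> GE2 \<Longrightarrow> y \<in> GE2 \<Longrightarrow> mat2_mult x y \<in> GE2"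
  unfolding GE2_eq_Inter_subgroups mat2_subgroup_def by blast

lemma elementary_upper_in_GE2: "M2 1 x 0 1 \<in> GE2"
  using GE2_gens_subset_GE2 by (auto simp: GE2_gens_def)

lemma elementary_lower_in_GE2: "M2 1 0 x 1 \<in> GE2"
  using GE2_gens_subset_GE2 by (auto simp: GE2_gens_def)

lemma diagonal_in_GE2: "u dvd 1 \<Longrightarrow> v dvd 1 \<Longrightarrow> M2 u 0 0 v \<in> GE2"
  using GE2_gens_subset_GE2 by (auto simp: GE2_gens_def)

lemma swap_in_GE2: "M2 0 1 1 (0::'a::comm_ring_1) \<in> GE2"
proof -
  have "mat2_mult (M2 1 0 0 (-1))
          (mat2_mult (M2 1 1 0 1) (mat2_mult (M2 1 0 (-1) 1) (M2 1 1 0 1))) \<in> (GE2::'a mat2 set)"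
    by (intro mat2_mult_in_GE2 elementary_upper_in_GE2 elementary_lower_in_GE2 diagonal_in_GE2) simp_all
  then show ?thesis
    by simp
qed

lemma lower_triangular_in_GE2:
  assumes "M2 c 0 s t \<in> GL2" and "c dvd 1"
  shows "M2 c 0 s (t::'a::comm_ring_1) \<in> GE2"
proof -
  have "t dvd 1"
    using assms(1) by (simp add: GL2_iff_det2_dvd_one dvd_mult_right)
  obtain c' where c': "1 = c * c'"
    using assms(2) by (auto elim: dvdE)
  have "M2 c 0 s t = mat2_mult (M2 1 0 (s*c') 1) (M2 c 0 0 t)"
    using c' by (simp add: mult.assoc mult.commute[of c'])
  then show ?thesis
    using mat2_mult_in_GE2 elementary_lower_in_GE2 diagonal_in_GE2 assms(2) \<open>t dvd 1\<close>
    by metis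
qed

lemma unit_equiv_iff:
  "(u, v) \<in> unit_equiv \<longleftrightarrow>
     u \<in> unimod_rows \<and> v \<in> unimod_rows \<and> (\<exists>c. c dvd 1 \<and> v = (c * fst u, c * snd u))"
  by (simp add: unit_equiv_def)

lemma GE2_if_row1_unit_equiv:
  assumes h: "h \<in> GE2" and g: "g \<in> GL2" and rows: "(row1 h, row1 g) \<in> unit_equiv"
  shows "g \<in> GE2"
proof -
  obtain h' where h': "mat2_mult h h' = mat2_one" "mat2_mult h' h = mat2_one"
    using h GE2_subset_GL2 unfolding GL2_def by blast
  then have "h' \<in> GL2"
    unfolding GL2_def by blast
  obtain c where c: "c dvd 1" "row1 g = (c * fst (row1 h), c * snd (row1 h))"
    using rows unfolding unit_equiv_iff by blast
  obtain a b h3 h4 where hm: "h = M2 a b h3 h4"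
    by (cases h)
  obtain p q r s where hm': "h' = M2 p q r s"
    by (cases h')
  obtain g3 g4 where gm: "g = M2 (c*a) (c*b) g3 g4"
    using c(2) hm by (cases g) simp
  have "a*p + b*r = 1" "a*q + b*s = 0"
    using h'(1) hm hm' by (simp_all add: mat2_one_def)
  \<comment> \<open>\<open>g h\<^sup>-\<^sup>1\<close> is lower triangular since its first row is \<open>c\<close> times that of \<open>h h\<^sup>-\<^sup>1\<close>\<close>
  then have "mat2_mult g h' = M2 c 0 (g3*p + g4*r) (g3*q + g4*s)"
    unfolding gm hm' by (simp flip: distrib_left add: mult.assoc)
  moreover have "mat2_mult g h' \<in> GL2"
    using g \<open>h' \<in> GL2\<close> by (rule mat2_mult_in_GL2)
  ultimately have "mat2_mult g h' \<in> GE2"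
    using lower_triangular_in_GE2 c(1) by metis
  then have "mat2_mult (mat2_mult g h') h \<in> GE2"
    using h mat2_mult_in_GE2 by blast
  then show ?thesis
    by (simp add: mat2_mult_assoc h'(2))
qed

lemma equiv_unit_equiv: "equiv unimod_rows (unit_equiv::(('a::comm_ring_1 \<times> 'a) \<times> _) set)"
proof (rule equivI)
  show "(unit_equiv::(('a \<times> 'a) \<times> _) set) \<subseteq> unimod_rows \<times> unimod_rows"
    by (auto simp: unit_equiv_iff)
  show "refl_on unimod_rows (unit_equiv::(('a \<times> 'a) \<times> _) set)"
    unfolding refl_on_def unit_equiv_iff by (auto intro!: exI[of _ 1])
  show "sym (unit_equiv::(('a \<times> 'a) \<times> _) set)"
  proof (rule symI)
    fix u v :: "'a \<times> 'a"
    assume "(u, v) \<in> unit_equiv"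
    then obtain c where uv: "u \<in> unimod_rows" "v \<in> unimod_rows" "c dvd 1"
      and v: "v = (c * fst u, c * snd u)"
      unfolding unit_equiv_iff by blast
    obtain c' where c': "1 = c * c'"
      using uv(3) by (rule dvdE)
    have "c' * (c * x) = x" for x
    proof -
      have "c' * (c * x) = (c * c') * x"
        by (simp only: ac_simps)
      then show ?thesis
        using c' by simp
    qed
    then have "u = (c' * fst v, c' * snd v)"
      using v by simp
    moreover have "c' dvd 1"
      using c' by (metis dvdI mult.commute)
    ultimately show "(v, u) \<in> unit_equiv"
      using uv unfolding unit_equiv_iff by blast
  qed
  show "trans (unit_equiv::(('a \<times> 'a) \<times> _) set)"
  proof (rule transI)
    fix u v w :: "'a \<times> 'a"
    assume "(u, v) \<in> unit_equiv" "(v, w) \<in> unit_equiv"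
    then obtain c d where "u \<in> unimod_rows" "w \<in> unimod_rows" "c dvd 1" "d dvd 1"
      and "v = (c * fst u, c * snd u)" "w = (d * fst v, d * snd v)"
      unfolding unit_equiv_iff by blast
    then have "d * c dvd 1" "w = ((d * c) * fst u, (d * c) * snd u)"
      by (simp_all add: mult_dvd_one mult.assoc)
    then show "(u, w) \<in> unit_equiv"
      using \<open>u \<in> unimod_rows\<close> \<open>w \<in> unimod_rows\<close> unfolding unit_equiv_iff by blast
  qed
qed

definition row_class :: "'a::comm_ring_1 \<times> 'a \<Rightarrow> ('a \<times> 'a) set" where
  "row_class u = unit_equiv `` {u}"

lemma row_class_in_Gamma_V: "u \<in> unimod_rows \<Longrightarrow> row_class u \<in> Gamma_V"
  unfolding Gamma_V_def row_class_def by (rule quotientI)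

lemma Gamma_V_obtain_row_class:
  assumes "X \<in> Gamma_V"
  obtains u where "u \<in> unimod_rows" and "X = row_class u"
  using assms unfolding Gamma_V_def row_class_def by (auto elim: quotientE)

lemma row_class_self: "u \<in> unimod_rows \<Longrightarrow> u \<in> row_class u"
  unfolding row_class_def using equiv_unit_equiv by (rule equiv_class_self)

lemma unit_equiv_if_in_Gamma_V: "X \<in> Gamma_V \<Longrightarrow> u \<in> X \<Longrightarrow> v \<in> X \<Longrightarrow> (u, v) \<in> unit_equiv"
  unfolding Gamma_V_def using equiv_unit_equiv in_quotient_imp_in_rel by fastforce

lemma row_class_eq_iff:
  "u \<in> unimod_rows \<Longrightarrow> v \<in> unimod_rows \<Longrightarrow> row_class u = row_class v \<longleftrightarrow> (u, v) \<in> unit_equiv"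
  unfolding row_class_def using equiv_unit_equiv by (rule eq_equiv_class_iff)

lemma Gamma_E_iff:
  "(X, Y) \<in> Gamma_E \<longleftrightarrow> X \<in> Gamma_V \<and> Y \<in> Gamma_V \<and>
     (\<exists>u\<in>X. \<exists>v\<in>Y. M2 (fst u) (snd u) (fst v) (snd v) \<in> GL2)"
  by (simp add: Gamma_E_def)

lemma GL2_rows_adjacent:
  assumes "M2 a b c d \<in> GL2"
  shows "(row_class (a, b), row_class (c, d)) \<in> Gamma_E"
proof -
  have rows: "(a, b) \<in> unimod_rows" "(c, d) \<in> unimod_rows"
    using assms by (rule rows_unimodular_if_GL2)+
  have "\<exists>u\<in>row_class (a, b). \<exists>v\<in>row_class (c, d). M2 (fst u) (snd u) (fst v) (snd v) \<in> GL2"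
    by (rule bexI[of _ "(a, b)"], rule bexI[of _ "(c, d)"]) (simp_all add: assms rows row_class_self)
  then show ?thesis
    unfolding Gamma_E_iff using rows row_class_in_Gamma_V by blast
qed

lemma sym_Gamma_E: "sym Gamma_E"
proof (rule symI)
  fix X Y :: "('a \<times> 'a) set"
  assume "(X, Y) \<in> Gamma_E"
  then obtain u v where "X \<in> Gamma_V" "Y \<in> Gamma_V" "u \<in> X" "v \<in> Y"
    and "M2 (fst u) (snd u) (fst v) (snd v) \<in> GL2"
    unfolding Gamma_E_iff by blast
  moreover from this(5) have "M2 (fst v) (snd v) (fst u) (snd u) \<in> GL2"
    by (rule M2_swap_rows_in_GL2)
  ultimately show "(Y, X) \<in> Gamma_E"
    unfolding Gamma_E_iff by blast
qed

definition rows_connected :: "'a::comm_ring_1 \<times> 'a \<Rightarrow> 'a \<times> 'a \<Rightarrow> bool" where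
  "rows_connected u v \<longleftrightarrow> (row_class u, row_class v) \<in> Gamma_E\<^sup>*"

lemma rows_connected_refl: "rows_connected u u"
  by (simp add: rows_connected_def)

lemma rows_connected_sym: "rows_connected u v \<Longrightarrow> rows_connected v u"
  using sym_rtrancl[OF sym_Gamma_E] unfolding rows_connected_def sym_def by blast

lemma rows_connected_trans: "rows_connected u v \<Longrightarrow> rows_connected v w \<Longrightarrow> rows_connected u w"
  unfolding rows_connected_def by (rule rtrancl_trans)

lemma rows_connected_if_GL2: "M2 a b c d \<in> GL2 \<Longrightarrow> rows_connected (a, b) (c, d)"
  unfolding rows_connected_def by (rule r_into_rtrancl) (rule GL2_rows_adjacent)

lemma GE2_gens_preserve_rows_connected:
  assumes g: "g \<in> GE2_gens" and m: "m \<in> GL2"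
  shows "rows_connected (row1 m) (row1 (mat2_mult g m))"
proof -
  obtain a b c d where m_eq: "m = M2 a b c d"
    by (cases m)
  from g consider x where "g = M2 1 x 0 1" | x where "g = M2 1 0 x 1"
    | u v where "g = M2 u 0 0 v" "u dvd 1" "v dvd 1"
    unfolding GE2_gens_def by blast
  then show ?thesis
  proof cases
    case (1 x)
    have "det2 (M2 c d (a + x*c) (b + x*d)) = - det2 m"
      by (simp add: m_eq algebra_simps)
    then have "M2 c d (a + x*c) (b + x*d) \<in> GL2"
      using m by (simp only: GL2_iff_det2_dvd_one minus_dvd_iff)
    then have "rows_connected (c, d) (a + x*c, b + x*d)"
      by (rule rows_connected_if_GL2)
    moreover have "rows_connected (a, b) (c, d)"
      using m m_eq rows_connected_if_GL2 by blast
    ultimately show ?thesis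
      by (simp add: 1 m_eq rows_connected_trans)
  next
    case 2
    then show ?thesis
      by (simp add: m_eq rows_connected_refl)
  next
    case (3 u v)
    have "(a, b) \<in> unimod_rows" "(u*a, u*b) \<in> unimod_rows"
      using m mat2_mult_in_GL2[OF GE2_gens_subset_GL2[THEN subsetD, OF g] m]
      by (simp_all add: 3 m_eq rows_unimodular_if_GL2)
    moreover from this have "((a, b), (u*a, u*b)) \<in> unit_equiv"
      using 3 by (auto simp: unit_equiv_iff)
    ultimately have "row_class (a, b) = row_class (u*a, u*b)"
      by (simp add: row_class_eq_iff)
    then show ?thesis
      by (simp add: 3 m_eq rows_connected_def)
  qed
qed

definition row1_connectivity_preservers :: "'a::comm_ring_1 mat2 set" where
  "row1_connectivity_preservers =
     {g \<in> GL2. \<forall>m\<in>GL2. rows_connected (row1 m) (row1 (mat2_mult g m))}"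

lemma mat2_subgroup_row1_connectivity_preservers: "mat2_subgroup row1_connectivity_preservers"
proof -
  let ?H = "row1_connectivity_preservers :: 'a mat2 set"
  have H_GL2: "g \<in> GL2" if "g \<in> ?H" for g
    using that unfolding row1_connectivity_preservers_def by blast
  have H_rows_connected: "rows_connected (row1 m) (row1 (mat2_mult g m))"
    if "g \<in> ?H" "m \<in> GL2" for g m
    using that unfolding row1_connectivity_preservers_def by blast
  have H_intro: "g \<in> ?H"
    if "g \<in> GL2" "\<And>m. m \<in> GL2 \<Longrightarrow> rows_connected (row1 m) (row1 (mat2_mult g m))" for g
    using that unfolding row1_connectivity_preservers_def by blast
  have "mat2_one \<in> ?H"
    using mat2_one_in_GL2 by (rule H_intro) (simp add: rows_connected_refl)
  moreover have "mat2_mult x y \<in> ?H" if x: "x \<in> ?H" and y: "y \<in> ?H" for x y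
  proof (rule H_intro)
    show "mat2_mult x y \<in> GL2"
      using H_GL2[OF x] H_GL2[OF y] by (rule mat2_mult_in_GL2)
    fix m :: "'a mat2"
    assume m: "m \<in> GL2"
    have "mat2_mult y m \<in> GL2"
      using H_GL2[OF y] m by (rule mat2_mult_in_GL2)
    then have "rows_connected (row1 (mat2_mult y m)) (row1 (mat2_mult x (mat2_mult y m)))"
      by (rule H_rows_connected[OF x])
    with H_rows_connected[OF y m] show "rows_connected (row1 m) (row1 (mat2_mult (mat2_mult x y) m))"
      unfolding mat2_mult_assoc by (rule rows_connected_trans)
  qed
  moreover have "\<exists>y\<in>?H. mat2_mult x y = mat2_one \<and> mat2_mult y x = mat2_one" if x: "x \<in> ?H" for x
  proof -
    obtain y where xy: "mat2_mult x y = mat2_one" "mat2_mult y x = mat2_one"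
      using H_GL2[OF x] unfolding GL2_def by blast
    then have "y \<in> GL2"
      unfolding GL2_def by blast
    have "y \<in> ?H"
    proof (rule H_intro)
      fix m :: "'a mat2"
      assume "m \<in> GL2"
      with \<open>y \<in> GL2\<close> have "mat2_mult y m \<in> GL2"
        by (rule mat2_mult_in_GL2)
      then have "rows_connected (row1 (mat2_mult y m)) (row1 (mat2_mult x (mat2_mult y m)))"
        by (rule H_rows_connected[OF x])
      then have "rows_connected (row1 (mat2_mult y m)) (row1 m)"
        by (simp add: mat2_mult_assoc[symmetric] xy(1))
      then show "rows_connected (row1 m) (row1 (mat2_mult y m))"
        by (rule rows_connected_sym)
    qed (fact \<open>y \<in> GL2\<close>)
    with xy show ?thesis
      by blast
  qed
  ultimately show ?thesis
    unfolding mat2_subgroup_def using H_GL2 by blast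
qed

lemma GE2_preserves_rows_connected:
  assumes "g \<in> GE2" and "m \<in> GL2"
  shows "rows_connected (row1 m) (row1 (mat2_mult g m))"
proof -
  have "GE2_gens \<subseteq> row1_connectivity_preservers"
    using GE2_gens_subset_GL2 GE2_gens_preserve_rows_connected
    unfolding row1_connectivity_preservers_def by blast
  with assms show ?thesis
    using GE2_subset_subgroup[OF mat2_subgroup_row1_connectivity_preservers]
    unfolding row1_connectivity_preservers_def by blast
qed

lemma Gamma_path_connected_if_GE2_eq_GL2:
  assumes "(GE2::'a::comm_ring_1 mat2 set) = GL2"
  shows "Gamma_path_connected TYPE('a)"
proof -
  have "rows_connected (1, 0) u" if u_unimod: "u \<in> unimod_rows" for u :: "'a \<times> 'a"
  proof -
    obtain a b where u: "u = (a, b)"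
      by (cases u)
    then obtain c d where "M2 a b c d \<in> GL2"
      using u_unimod unimodular_row_completion by blast
    then have "rows_connected (row1 mat2_one) (row1 (mat2_mult (M2 a b c d) mat2_one))"
      using assms mat2_one_in_GL2 GE2_preserves_rows_connected by blast
    then show ?thesis
      by (simp add: mat2_one_def u)
  qed
  then show ?thesis
    unfolding Gamma_path_connected_def
    by (metis Gamma_V_obtain_row_class rows_connected_def rows_connected_sym rows_connected_trans)
qed

lemma row1_in_GE2_along_path:
  assumes "(row_class (1, 0), Y) \<in> (Gamma_E::(('a::comm_ring_1 \<times> 'a) set \<times> _) set)\<^sup>*"
  shows "\<exists>h\<in>GE2. row1 h \<in> Y"
  using assms
proof (induction rule: rtrancl_induct)
  case base
  have "row1 (mat2_one::'a mat2) \<in> row_class (1, 0)"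
    by (simp add: mat2_one_def row_class_self one_zero_in_unimod_rows)
  then show ?case
    using mat2_one_in_GE2 by blast
next
  case (step X Y)
  then obtain h where h: "h \<in> GE2" "row1 h \<in> X"
    by blast
  from \<open>(X, Y) \<in> Gamma_E\<close> obtain u v where "X \<in> Gamma_V" "u \<in> X" "v \<in> Y"
    and uv: "M2 (fst u) (snd u) (fst v) (snd v) \<in> GL2"
    unfolding Gamma_E_iff by blast
  then have "(row1 h, row1 (M2 (fst u) (snd u) (fst v) (snd v))) \<in> unit_equiv"
    using h(2) unit_equiv_if_in_Gamma_V by simp
  then have "M2 (fst u) (snd u) (fst v) (snd v) \<in> GE2"
    using GE2_if_row1_unit_equiv h(1) uv by blast
  then have "mat2_mult (M2 0 1 1 0) (M2 (fst u) (snd u) (fst v) (snd v)) \<in> GE2"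
    by (rule mat2_mult_in_GE2[OF swap_in_GE2])
  then show ?case
    using \<open>v \<in> Y\<close> by force
qed

lemma GL2_subset_GE2_if_Gamma_path_connected:
  assumes "Gamma_path_connected TYPE('a::comm_ring_1)"
  shows "(GL2::'a mat2 set) \<subseteq> GE2"
proof
  fix g :: "'a mat2"
  assume g: "g \<in> GL2"
  obtain a b c d where g_eq: "g = M2 a b c d"
    by (cases g)
  have "(a, b) \<in> unimod_rows"
    using g g_eq rows_unimodular_if_GL2 by blast
  then have "(row_class (1, 0), row_class (a, b)) \<in> Gamma_E\<^sup>*"
    using assms row_class_in_Gamma_V one_zero_in_unimod_rows
    unfolding Gamma_path_connected_def by blast
  then obtain h where h: "h \<in> GE2" "row1 h \<in> row_class (a, b)"
    using row1_in_GE2_along_path by blast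
  have "row1 g \<in> row_class (a, b)"
    using \<open>(a, b) \<in> unimod_rows\<close> by (simp add: g_eq row_class_self)
  with h(2) have "(row1 h, row1 g) \<in> unit_equiv"
    using \<open>(a, b) \<in> unimod_rows\<close> row_class_in_Gamma_V unit_equiv_if_in_Gamma_V by blast
  with h(1) g show "g \<in> GE2"
    by (rule GE2_if_row1_unit_equiv)
qed

theorem corollary3p5:
  shows "GE2_ring TYPE('a::comm_ring_1) \<longleftrightarrow> Gamma_path_connected TYPE('a)"
proof
  assume "GE2_ring TYPE('a)"
  then show "Gamma_path_connected TYPE('a)"
    unfolding GE2_ring_def by (rule Gamma_path_connected_if_GE2_eq_GL2)
next
  assume "Gamma_path_connected TYPE('a)"
  then have "(GL2::'a mat2 set) \<subseteq> GE2"
    by (rule GL2_subset_GE2_if_Gamma_path_connected)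
  with GE2_subset_GL2 show "GE2_ring TYPE('a)"
    unfolding GE2_ring_def by blast
qed

end
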